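(* Let $p\in(1,\infty)$. Define $F_p:\mathbb{C}\to\mathbb{C}$ by $F_p(z)=z\,|z|^{p-2}$ for $z\neq 0$ and $F_p(0)=0$. Let $\varphi_p:=\arcsin|1-\tfrac{2}{p}|$ and \[ \Sigma_p:=\{z\in\mathbb{C}\setminus\{0\}: |\arg z|\le \varphi_p\}\cup\{0\}. \] Then \[ \overline{\{(w-z)\cdot\overline{(F_p(w)-F_p(z))} : z,w\in\mathbb{C}\}}=\Sigma_p, \] where the bar over the set denotes the closure in $\mathbb{C}$ and the bar over $F_p(w)-F_p(z)$ denotes complex conjugation.
   Context: $\arg$ denotes the principal argument, with values in $(-\pi,\pi]$. *)

theory Defs
  imports "HOL-Complex_Analysis.Complex_Analysis"
begin

definition F :: "real \<Rightarrow> complex \<Rightarrow> complex" where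
  "F p z = (if z = 0 then 0 else z * complex_of_real (norm z powr (p - 2)))"

definition phi :: "real \<Rightarrow> real" where
  "phi p = arcsin \<bar>1 - 2 / p\<bar>"

definition Sigma_p :: "real \<Rightarrow> complex set" where
  "Sigma_p p = {z. z \<noteq> 0 \<and> \<bar>Arg z\<bar> \<le> phi p} \<union> {0}"

end

theory Submission
  imports Defs "HOL-Library.Quadratic_Discriminant"
begin

(* Since F_p is multiplicative and the pairing (w - z) cnj (F_p w - F_p z) is homogeneous of
   degree p under z, w \<mapsto> a z, a w, every pairing is a nonnegative multiple of one with z = 1.
   For z = 1 the sector condition reduces, after splitting off a square, to a one-variable
   inequality in |w|, which becomes an inequality between hyperbolic cosines and follows from
   convexity. Conversely, pairing(1, 1 + e h) is asymptotic to e^2 h cnj (h + p - 2) with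
   h = 1 + i s, and these limits fill the whole sector; rescaling removes the factor e^2. *)

definition pairing :: "real \<Rightarrow> complex \<Rightarrow> complex \<Rightarrow> complex" where
  "pairing p z w = (w - z) * cnj (F p w - F p z)"

(* Sigma_p without Arg: sin phi_p = |p - 2| / p, so tan phi_p ^ 2 = (p - 2)^2 / (4 (p - 1)). *)
definition quadratic_sector :: "real \<Rightarrow> complex set" where
  "quadratic_sector p = {v. 0 \<le> Re v \<and> 4 * (p - 1) * (Im v)\<^sup>2 \<le> (p - 2)\<^sup>2 * (Re v)\<^sup>2}"

lemma F_mult: "F p (a * b) = F p a * F p b"
  by (simp add: F_def norm_mult powr_mult mult_ac)

lemma F_one [simp]: "F p 1 = 1"
  by (simp add: F_def)

lemma pairing_mult:
  "pairing p (a * z) (a * w) = of_real (cmod a powr p) * pairing p z w"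
proof (cases "a = 0")
  case False
  have "a * cnj (F p a) = (a * cnj a) * of_real (cmod a powr (p - 2))"
    by (simp add: F_def mult_ac)
  also have "\<dots> = of_real ((cmod a)\<^sup>2 * cmod a powr (p - 2))"
    by (simp flip: complex_norm_square)
  also have "(cmod a)\<^sup>2 * cmod a powr (p - 2) = cmod a powr p"
    using False by (simp add: powr_add[symmetric] flip: powr_numeral)
  finally have norm_powr: "a * cnj (F p a) = of_real (cmod a powr p)" .
  then show ?thesis
    unfolding pairing_def F_mult by (simp flip: norm_powr add: algebra_simps)
qed (simp add: pairing_def F_def)

lemma quadratic_sector_scaleR:
  assumes "0 \<le> k" "v \<in> quadratic_sector p"
  shows "of_real k * v \<in> quadratic_sector p"
proof -
  have "k\<^sup>2 * (4 * (p - 1) * (Im v)\<^sup>2) \<le> k\<^sup>2 * ((p - 2)\<^sup>2 * (Re v)\<^sup>2)"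
    using assms(2) by (intro mult_left_mono) (auto simp: quadratic_sector_def)
  then show ?thesis
    using assms by (simp add: quadratic_sector_def power_mult_distrib mult_ac)
qed

lemma closed_quadratic_sector: "closed (quadratic_sector p)"
  unfolding quadratic_sector_def Collect_conj_eq
  by (intro closed_Int closed_Collect_le continuous_intros)

lemma le_arcsin_iff:
  fixes b s :: real
  assumes "0 \<le> b" "b \<le> pi" "0 \<le> s" "s \<le> 1"
  shows "b \<le> arcsin s \<longleftrightarrow> 0 \<le> cos b \<and> sin b \<le> s"
proof
  assume b: "b \<le> arcsin s"
  have "arcsin s \<le> pi / 2"
    using assms arcsin_bounded[of s] by simp
  then show "0 \<le> cos b \<and> sin b \<le> s"
    using assms b sin_monotone_2pi_le[of b "arcsin s"] by (auto intro!: cos_ge_zero)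
next
  assume cs: "0 \<le> cos b \<and> sin b \<le> s"
  have "b \<le> pi / 2"
    using assms cos_lt_zero_pi[of b] cs by (cases "b \<le> pi / 2") auto
  then have "b = arcsin (sin b)"
    using assms by (simp add: arcsin_sin)
  also have "\<dots> \<le> arcsin s"
    using assms cs sin_ge_minus_one[of b] by (intro arcsin_le_arcsin) auto
  finally show "b \<le> arcsin s" .
qed

lemma abs_Arg_le_arcsin_iff:
  assumes "z \<noteq> 0" "0 \<le> s" "s \<le> 1"
  shows "\<bar>Arg z\<bar> \<le> arcsin s \<longleftrightarrow> 0 \<le> Re z \<and> \<bar>Im z\<bar> \<le> s * cmod z"
proof -
  have "cos \<bar>Arg z\<bar> = Re z / cmod z" "sin \<bar>Arg z\<bar> = \<bar>Im z\<bar> / cmod z"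
    using assms by (auto simp: cos_Arg sin_Arg abs_if Arg_neg_iff)
  moreover have "\<bar>Arg z\<bar> \<le> pi"
    using Arg_bounded[of z] by auto
  ultimately show ?thesis
    using assms le_arcsin_iff[of "\<bar>Arg z\<bar>" s] by (simp add: divide_le_eq zero_le_divide_iff mult.commute)
qed

lemma Sigma_p_eq_quadratic_sector:
  assumes "1 < p"
  shows "Sigma_p p = quadratic_sector p"
proof (intro set_eqI)
  fix z
  define s where "s = \<bar>1 - 2 / p\<bar>"
  have "0 < 2 / p" "2 / p < 2"
    using assms by (simp_all add: divide_less_eq)
  then have s: "0 \<le> s" "s \<le> 1"
    by (auto simp: s_def abs_le_iff)
  have "s\<^sup>2 = (p - 2)\<^sup>2 / p\<^sup>2"
    using assms by (simp add: s_def power_divide[symmetric] diff_divide_distrib)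
  then have "p\<^sup>2 * (s * cmod z)\<^sup>2 = (p - 2)\<^sup>2 * ((Re z)\<^sup>2 + (Im z)\<^sup>2)"
    using assms by (simp add: power_mult_distrib cmod_power2)
  moreover have "\<bar>Im z\<bar> \<le> s * cmod z \<longleftrightarrow> p\<^sup>2 * (Im z)\<^sup>2 \<le> p\<^sup>2 * (s * cmod z)\<^sup>2"
    using assms s by (simp add: abs_le_square_iff[symmetric])
  moreover have "p\<^sup>2 * (Im z)\<^sup>2 = (p - 2)\<^sup>2 * (Im z)\<^sup>2 + 4 * (p - 1) * (Im z)\<^sup>2"
    by algebra
  ultimately have "\<bar>Im z\<bar> \<le> s * cmod z \<longleftrightarrow> 4 * (p - 1) * (Im z)\<^sup>2 \<le> (p - 2)\<^sup>2 * (Re z)\<^sup>2"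
    by (simp add: distrib_left)
  then show "z \<in> Sigma_p p \<longleftrightarrow> z \<in> quadratic_sector p"
    using abs_Arg_le_arcsin_iff[OF _ s]
    by (cases "z = 0") (auto simp: Sigma_p_def phi_def s_def quadratic_sector_def)
qed

lemma nonneg_if_second_derivative_nonneg:
  fixes f f' f'' :: "real \<Rightarrow> real"
  assumes "\<And>x. (f has_real_derivative f' x) (at x)"
    and "\<And>x. (f' has_real_derivative f'' x) (at x)"
    and "f 0 = 0" "f' 0 = 0" "\<And>x. 0 \<le> x \<Longrightarrow> 0 \<le> f'' x" "0 \<le> t"
  shows "0 \<le> f t"
proof -
  have f'_nonneg: "0 \<le> f' x" if "0 \<le> x" for x
    using DERIV_nonneg_imp_nondecreasing[OF that, of f'] assms(2,4,5) by fastforce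
  show ?thesis
    using DERIV_nonneg_imp_nondecreasing[OF assms(6), of f] assms(1,3) f'_nonneg by fastforce
qed

lemma cosh_difference_inequality:
  fixes c t :: real
  assumes "0 < c"
  shows "4 * c * (cosh ((c - 1) * t) - 1) \<le> (c - 1)\<^sup>2 * (cosh ((c + 1) * t) - cosh ((c - 1) * t))"
proof -
  define g where "g t = (c - 1)\<^sup>2 * (cosh ((c + 1) * t) - cosh ((c - 1) * t))
    - 4 * c * (cosh ((c - 1) * t) - 1)" for t
  define g' where "g' t = (c - 1)\<^sup>2 * ((c + 1) * sinh ((c + 1) * t) - (c - 1) * sinh ((c - 1) * t))
    - 4 * c * (c - 1) * sinh ((c - 1) * t)" for t
  define g'' where "g'' t = (c - 1)\<^sup>2 * (c + 1)\<^sup>2 * (cosh ((c + 1) * t) - cosh ((c - 1) * t))" for t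
  have "(g has_real_derivative g' x) (at x)" for x
    unfolding g_def g'_def by (auto intro!: derivative_eq_intros simp: algebra_simps)
  moreover have "(g' has_real_derivative g'' x) (at x)" for x
    unfolding g'_def g''_def
    by (auto intro!: derivative_eq_intros simp: algebra_simps power2_eq_square)
  moreover have "0 \<le> g'' x" if "0 \<le> x" for x
  proof -
    have "cosh ((c - 1) * x) = cosh \<bar>(c - 1) * x\<bar>"
      by simp
    also have "\<dots> \<le> cosh ((c + 1) * x)"
      using assms that by (subst cosh_real_nonneg_le_iff) (auto simp: abs_mult intro!: mult_right_mono)
    finally show ?thesis
      by (simp add: g''_def)
  qed
  ultimately have "0 \<le> g \<bar>t\<bar>"
    by (intro nonneg_if_second_derivative_nonneg[of g g' g'']) (auto simp: g_def g'_def)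
  moreover have "g \<bar>t\<bar> = g t"
    by (cases "0 \<le> t") (simp_all add: g_def)
  ultimately show ?thesis
    by (simp add: g_def)
qed

lemma powr_difference_inequality:
  fixes c r :: real
  assumes "0 < c" "0 < r"
  shows "4 * c * (r powr c - r)\<^sup>2 \<le> (c - 1)\<^sup>2 * ((r powr c)\<^sup>2 - 1) * (r\<^sup>2 - 1)"
proof -
  define a where "a = r powr c"
  define t where "t = ln r"
  have a: "0 < a"
    using assms by (simp add: a_def)
  have exps: "exp ((c + 1) * t) = a * r" "exp ((c - 1) * t) = a / r"
    using assms by (simp_all add: a_def t_def powr_def algebra_simps exp_add exp_diff)
  have cosh_identities: "2 * (a * r) * cosh ((c + 1) * t) = (a * r)\<^sup>2 + 1"
    "2 * (a * r) * cosh ((c - 1) * t) = a\<^sup>2 + r\<^sup>2"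
    unfolding cosh_def exp_minus exps using assms a by (simp_all add: field_simps power2_eq_square)
  have "2 * (a * r) * ((c - 1)\<^sup>2 * (cosh ((c + 1) * t) - cosh ((c - 1) * t))
      - 4 * c * (cosh ((c - 1) * t) - 1))
      = (c - 1)\<^sup>2 * (2 * (a * r) * cosh ((c + 1) * t) - 2 * (a * r) * cosh ((c - 1) * t))
        - 4 * c * (2 * (a * r) * cosh ((c - 1) * t) - 2 * (a * r))"
    by (simp add: algebra_simps)
  also have "\<dots> = (c - 1)\<^sup>2 * (a\<^sup>2 - 1) * (r\<^sup>2 - 1) - 4 * c * (a - r)\<^sup>2"
    unfolding cosh_identities by algebra
  moreover have "0 \<le> 2 * (a * r) * ((c - 1)\<^sup>2 * (cosh ((c + 1) * t) - cosh ((c - 1) * t))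
      - 4 * c * (cosh ((c - 1) * t) - 1))"
    using cosh_difference_inequality[OF assms(1), of t] assms a by simp
  ultimately show ?thesis
    by (simp add: a_def)
qed

lemma powr_diff_one_mult_diff_one_nonneg:
  fixes a r :: real
  assumes "0 < a" "0 \<le> r"
  shows "0 \<le> (r powr a - 1) * (r - 1)"
proof (cases "1 \<le> r")
  case True
  then show ?thesis
    using assms ge_one_powr_ge_zero[of r a] by simp
next
  case False
  then have "r powr a \<le> 1 powr a"
    using assms by (intro powr_mono2) auto
  then show ?thesis
    using False by (simp add: mult_nonpos_nonpos)
qed

lemma sector_bound_at_one:
  fixes p q r x y :: real
  assumes "1 < p" "0 < r" "x\<^sup>2 + y\<^sup>2 = r\<^sup>2" "q = r powr (p - 2)"
  shows "4 * (p - 1) * ((q - 1) * y)\<^sup>2 \<le> (p - 2)\<^sup>2 * (q * r\<^sup>2 + 1 - (1 + q) * x)\<^sup>2"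
proof -
  define R where "R = q * r\<^sup>2 + 1 - (1 + q) * x"
  have "r powr (p - 1) = q * r"
    using assms powr_mult_base[of r "p - 2"] by (simp add: mult.commute)
  then have "4 * (p - 1) * (q * r - r)\<^sup>2 \<le> (p - 2)\<^sup>2 * ((q * r)\<^sup>2 - 1) * (r\<^sup>2 - 1)"
    using powr_difference_inequality[of "p - 1" r] assms by simp
  moreover have "(q * r - r)\<^sup>2 = (q - 1)\<^sup>2 * r\<^sup>2" "(q * r)\<^sup>2 = q\<^sup>2 * r\<^sup>2"
    by algebra+
  ultimately have scalar: "4 * (p - 1) * (q - 1)\<^sup>2 * r\<^sup>2 \<le> (p - 2)\<^sup>2 * (q\<^sup>2 * r\<^sup>2 - 1) * (r\<^sup>2 - 1)"
    by (simp add: mult.assoc)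
  \<comment> \<open>Lagrange-type identity: it reduces the bound to the one-variable inequality scalar\<close>
  have sum_of_squares: "r\<^sup>2 * R\<^sup>2
      = (q\<^sup>2 * r\<^sup>2 - 1) * (r\<^sup>2 - 1) * y\<^sup>2 + ((q * r\<^sup>2 + 1) * x - (1 + q) * r\<^sup>2)\<^sup>2"
  proof -
    have "y\<^sup>2 = r\<^sup>2 - x\<^sup>2"
      using assms(3) by simp
    then show ?thesis
      unfolding R_def by algebra
  qed
  have "r\<^sup>2 * (4 * (p - 1) * ((q - 1) * y)\<^sup>2) = (4 * (p - 1) * (q - 1)\<^sup>2 * r\<^sup>2) * y\<^sup>2"
    by (simp add: power_mult_distrib mult_ac)
  also have "\<dots> \<le> (p - 2)\<^sup>2 * ((q\<^sup>2 * r\<^sup>2 - 1) * (r\<^sup>2 - 1) * y\<^sup>2)"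
    using mult_right_mono[OF scalar, of "y\<^sup>2"] by (simp add: mult_ac)
  also have "\<dots> \<le> (p - 2)\<^sup>2 * (r\<^sup>2 * R\<^sup>2)"
    unfolding sum_of_squares by (intro mult_left_mono) auto
  finally show ?thesis
    using assms(2) by (simp add: R_def mult.left_commute[of "r\<^sup>2"])
qed

lemma pairing_one_in_quadratic_sector:
  assumes "1 < p"
  shows "pairing p 1 u \<in> quadratic_sector p"
proof -
  define r where "r = cmod u"
  define q where "q = r powr (p - 2)"
  have pairing_eq: "pairing p 1 u = (u - 1) * cnj (of_real q * u - 1)"
    by (simp add: pairing_def F_def q_def r_def mult.commute)
  have Re: "Re (pairing p 1 u) = q * r\<^sup>2 + 1 - (1 + q) * Re u"
    and Im: "Im (pairing p 1 u) = (q - 1) * Im u"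
    unfolding pairing_eq r_def cmod_power2 by (simp_all add: algebra_simps power2_eq_square)
  have qr: "q * r = r powr (p - 1)"
    using powr_mult_base[of r "p - 2"] by (cases "r = 0") (simp_all add: q_def r_def mult.commute)
  have "q * r\<^sup>2 + 1 - (1 + q) * r \<le> q * r\<^sup>2 + 1 - (1 + q) * Re u"
    using complex_Re_le_cmod[of u] by (simp add: r_def q_def mult_left_mono)
  moreover have "q * r\<^sup>2 + 1 - (1 + q) * r = (r powr (p - 1) - 1) * (r - 1)"
    by (simp add: qr[symmetric] power2_eq_square algebra_simps)
  moreover have "0 \<le> (r powr (p - 1) - 1) * (r - 1)"
    using assms by (intro powr_diff_one_mult_diff_one_nonneg) (auto simp: r_def)
  ultimately have "0 \<le> Re (pairing p 1 u)"
    unfolding Re by linarith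
  moreover have "4 * (p - 1) * (Im (pairing p 1 u))\<^sup>2 \<le> (p - 2)\<^sup>2 * (Re (pairing p 1 u))\<^sup>2"
  proof (cases "u = 0")
    case False
    then show ?thesis
      unfolding Re Im using assms
      by (intro sector_bound_at_one) (auto simp: r_def q_def cmod_power2)
  qed (unfold Re Im, simp)
  ultimately show ?thesis
    by (simp add: quadratic_sector_def)
qed

lemma pairing_in_quadratic_sector:
  assumes "1 < p"
  shows "pairing p z w \<in> quadratic_sector p"
proof (cases "z = 0")
  case True
  then have "pairing p z w = of_real (cmod w powr p) * pairing p 0 1"
    using pairing_mult[of p w 0 1] by simp
  then show ?thesis
    by (simp add: pairing_def F_def quadratic_sector_def)
next
  case False
  then have "pairing p z w = of_real (cmod z powr p) * pairing p 1 (w / z)"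
    using pairing_mult[of p z 1 "w / z"] by simp
  then show ?thesis
    using assms by (simp add: quadratic_sector_scaleR pairing_one_in_quadratic_sector)
qed

lemma quadratic_sector_parametrization:
  assumes "1 < p" "v \<in> quadratic_sector p" "v \<noteq> 0"
  obtains lam s where "0 < lam" "v = of_real lam * Complex 1 s * cnj (Complex (p - 1) s)"
proof -
  define a b where "a = Re v" and "b = Im v"
  have sector: "0 \<le> a" "4 * (p - 1) * b\<^sup>2 \<le> (p - 2)\<^sup>2 * a\<^sup>2"
    using assms(2) by (simp_all add: quadratic_sector_def a_def b_def)
  have "0 < a"
  proof (rule ccontr)
    assume "\<not> 0 < a"
    then have "a = 0" "b = 0"
      using assms(1) sector by (auto simp: not_less mult_le_0_iff)
    then show False
      using assms(3) by (simp add: a_def b_def complex_eq_iff)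
  qed
  obtain s where s: "b * (p - 1 + s\<^sup>2) = a * s * (p - 2)"
  proof (cases "b = 0")
    case False
    \<comment> \<open>the sector condition is exactly the nonnegativity of this discriminant\<close>
    have "discrim b (- (p - 2) * a) (b * (p - 1)) = (p - 2)\<^sup>2 * a\<^sup>2 - 4 * (p - 1) * b\<^sup>2"
      by (simp add: discrim_def power2_eq_square algebra_simps)
    then have "0 \<le> discrim b (- (p - 2) * a) (b * (p - 1))"
      using sector by simp
    then obtain s where "b * s\<^sup>2 + (- (p - 2) * a) * s + b * (p - 1) = 0"
      using discriminant_nonneg_ex False by blast
    then show ?thesis
      by (intro that[of s]) (simp add: algebra_simps)
  qed (use that[of 0] in simp)
  define lam where "lam = a / (p - 1 + s\<^sup>2)"
  have N: "0 < p - 1 + s\<^sup>2"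
    using assms(1) by (simp add: add_pos_nonneg)
  have "Re v = lam * (p - 1 + s\<^sup>2)"
    using N by (simp add: lam_def a_def)
  moreover have "Im v = lam * (s * (p - 2))"
    using N s by (simp add: lam_def b_def nonzero_eq_divide_eq mult_ac)
  ultimately have "v = of_real lam * Complex 1 s * cnj (Complex (p - 1) s)"
    by (simp add: complex_eq_iff power2_eq_square algebra_simps)
  moreover have "0 < lam"
    using N \<open>0 < a\<close> by (simp add: lam_def)
  ultimately show ?thesis
    using that by blast
qed

lemma F_one_plus_difference_quotient:
  "((\<lambda>e. (F p (1 + of_real e * h) - 1) / of_real e) \<longlongrightarrow> h + of_real ((p - 2) * Re h)) (at 0)"
proof -
  define \<phi> where "\<phi> e = ((1 + e * Re h)\<^sup>2 + (e * Im h)\<^sup>2) powr ((p - 2) / 2)" for e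
  have F_eq: "F p (1 + of_real e * h) = (1 + of_real e * h) * of_real (\<phi> e)" for e
  proof -
    have "cmod (1 + of_real e * h) powr (p - 2) = (cmod (1 + of_real e * h) powr 2) powr ((p - 2) / 2)"
      by (simp only: powr_powr times_divide_eq_right nonzero_mult_div_cancel_left zero_neq_numeral)
    also have "\<dots> = \<phi> e"
      by (simp add: \<phi>_def cmod_power2)
    finally show ?thesis
      by (simp add: F_def)
  qed
  have "((\<lambda>e. (1 + e * Re h)\<^sup>2 + (e * Im h)\<^sup>2) has_real_derivative 2 * Re h) (at 0)"
    by (auto intro!: derivative_eq_intros)
  from DERIV_fun_powr[OF this, of "(p - 2) / 2"]
  have d\<phi>: "(\<phi> has_real_derivative (p - 2) * Re h) (at 0)"
    by (simp add: \<phi>_def[abs_def])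
  have \<phi>0: "\<phi> 0 = 1"
    by (simp add: \<phi>_def)
  have "((\<lambda>e. (\<phi> e - 1) / e) \<longlongrightarrow> (p - 2) * Re h) (at 0)"
    using DERIV_D[OF d\<phi>] by (simp add: \<phi>0)
  moreover have "(\<phi> \<longlongrightarrow> 1) (at 0)"
    using DERIV_isCont[OF d\<phi>] by (simp add: isCont_def \<phi>0)
  ultimately have "((\<lambda>e. h * of_real (\<phi> e) + of_real ((\<phi> e - 1) / e))
      \<longlongrightarrow> h * of_real 1 + of_real ((p - 2) * Re h)) (at 0)"
    by (intro tendsto_intros)
  moreover have "\<forall>\<^sub>F e in at 0. (F p (1 + of_real e * h) - 1) / of_real e
      = h * of_real (\<phi> e) + of_real ((\<phi> e - 1) / e)"
    using eventually_neq_at_within[of 0 0 UNIV]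
  proof (rule eventually_mono)
    fix e :: real
    assume "e \<noteq> 0"
    then have quotient: "of_real (\<phi> e) - 1 = of_real e * (of_real ((\<phi> e - 1) / e) :: complex)"
      by (simp flip: of_real_mult)
    have "F p (1 + of_real e * h) - 1 = of_real e * h * of_real (\<phi> e) + (of_real (\<phi> e) - 1)"
      unfolding F_eq by (simp add: algebra_simps)
    also have "\<dots> = of_real e * (h * of_real (\<phi> e) + of_real ((\<phi> e - 1) / e))"
      by (simp only: quotient distrib_left mult.assoc)
    finally show "(F p (1 + of_real e * h) - 1) / of_real e = h * of_real (\<phi> e) + of_real ((\<phi> e - 1) / e)"
      using \<open>e \<noteq> 0\<close> by (simp only: nonzero_mult_div_cancel_left of_real_eq_0_iff not_False_eq_True)
  qed
  ultimately show ?thesis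
    by (simp add: tendsto_cong)
qed

lemma quadratic_sector_subset_closure:
  assumes "1 < p"
  shows "quadratic_sector p \<subseteq> closure {pairing p z w | z w. True}"
proof
  fix v
  assume v: "v \<in> quadratic_sector p"
  show "v \<in> closure {pairing p z w | z w. True}"
  proof (cases "v = 0")
    case True
    then have "v = pairing p 0 0"
      by (simp add: pairing_def)
    then show ?thesis
      by (intro closure_subset[THEN subsetD]) blast
  next
    case False
    then obtain lam s where lam: "0 < lam"
      and v_eq: "v = of_real lam * Complex 1 s * cnj (Complex (p - 1) s)"
      using quadratic_sector_parametrization[OF assms v] by blast
    define h where "h = Complex 1 s"
    define Q where "Q = (\<lambda>e. (F p (1 + of_real e * h) - 1) / of_real e)"
    have "h + of_real ((p - 2) * Re h) = Complex (p - 1) s"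
      by (simp add: h_def complex_eq_iff)
    then have "(Q \<longlongrightarrow> Complex (p - 1) s) (at 0)"
      using F_one_plus_difference_quotient[of p h] by (simp add: Q_def)
    then have lim: "((\<lambda>e. of_real lam * h * cnj (Q e)) \<longlongrightarrow> v) (at 0)"
      unfolding v_eq h_def by (rule tendsto_mult_left[OF tendsto_cnj])
    have mem: "of_real lam * h * cnj (Q e) \<in> {pairing p z w | z w. True}" if "e \<noteq> 0" for e
    proof -
      define c where "c = (lam / e\<^sup>2) powr (1 / p)"
      have "c powr p = lam / e\<^sup>2"
        using assms lam that by (simp add: c_def powr_powr)
      then have "cmod (of_real c) powr p = lam / e\<^sup>2"
        by (simp add: c_def)
      moreover have "pairing p 1 (1 + of_real e * h) = of_real (e\<^sup>2) * h * cnj (Q e)"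
        using that by (simp add: pairing_def Q_def power2_eq_square)
      ultimately have "pairing p (of_real c * 1) (of_real c * (1 + of_real e * h))
          = of_real (lam / e\<^sup>2) * (of_real (e\<^sup>2) * h * cnj (Q e))"
        by (simp only: pairing_mult)
      also have "\<dots> = of_real lam * h * cnj (Q e)"
        using that by (simp flip: of_real_mult)
      finally show ?thesis
        by (intro CollectI exI[of _ "of_real c * 1"] exI[of _ "of_real c * (1 + of_real e * h)"]) simp
    qed
    have "\<forall>\<^sub>F e in at 0. of_real lam * h * cnj (Q e) \<in> closure {pairing p z w | z w. True}"
      using eventually_neq_at_within[of 0 0 UNIV]
      by (rule eventually_mono) (rule closure_subset[THEN subsetD, OF mem])
    then show ?thesis
      by (rule Lim_in_closed_set[OF closed_closure _ at_neq_bot lim])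
  qed
qed

theorem lemma2:
  fixes p :: real
  assumes "1 < p"
  shows "closure {(w - z) * cnj (F p w - F p z) | z w. True} = Sigma_p p"
proof -
  have "closure {pairing p z w | z w. True} \<subseteq> quadratic_sector p"
    using pairing_in_quadratic_sector[OF assms] by (intro closure_minimal closed_quadratic_sector) blast
  then show ?thesis
    using quadratic_sector_subset_closure[OF assms] Sigma_p_eq_quadratic_sector[OF assms]
    by (simp add: pairing_def)
qed

end
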